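(* Let $k_{\mathcal{Z}}$ and $k_{\mathcal{Y}}$ be strictly positive definite kernels on $\mathcal{Z}$ and $\mathcal{Y}=\{\bm{e}_1,\dots,\bm{e}_c\}\subset\mathbb{R}^c$, and let $\varepsilon>0$. Let $(\bm{z}_i,\bm{y}_i)_{i=1}^n$ be observations with $\bm{z}_1,\dots,\bm{z}_n\in\mathcal{Z}$ pairwise distinct and $\bm{y}_i\in\mathcal{Y}$, where every element of $\mathcal{Y}$ occurs among the $\bm{y}_i$. Let $\bm{K}_{ij}=k_{\mathcal{Z}}(\bm{z}_i,\bm{z}_j)$, $\bm{L}_{ij}=k_{\mathcal{Y}}(\bm{y}_i,\bm{y}_j)$, $\tilde{\bm{L}}=\varepsilon n\bm{I}_n+\bm{L}$, and for $y\in\mathcal{Y}$ let $\bm{L}_y=(k_{\mathcal{Y}}(\bm{y}_1,y),\dots,k_{\mathcal{Y}}(\bm{y}_n,y))^T$ (the column of $\bm{L}$ indexed by any $i$ with $\bm{y}_i=y$). Define the empirical conditional mean embeddings $\hat{\mu}_{Z|y}=\bm{\Phi}\tilde{\bm{L}}^{-1}\bm{L}_y\in\mathcal{H}_{\mathcal{Z}}$, where $\bm{\Phi}=(\phi(\bm{z}_1),\dots,\phi(\bm{z}_n))$, and $$\hat{D}(y_i,y_j)=\mathrm{MCMD}(\hat{P}_{Z|y_i},\hat{P}_{Z|y_j})=\|\hat{\mu}_{Z|y_i}-\hat{\mu}_{Z|y_j}\|_{\mathcal{H}_{\mathcal{Z}}}=\sqrt{(\bm{L}_{y_i}-\bm{L}_{y_j})^T\tilde{\bm{L}}^{-1}\bm{K}\tilde{\bm{L}}^{-1}(\bm{L}_{y_i}-\bm{L}_{y_j})}.$$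 Then $\hat{D}$ is a metric on $\mathcal{Y}$.
   Context: $\mathcal{H}_{\mathcal{Z}}$ is the RKHS of $k_{\mathcal{Z}}$ with feature map $\phi(z)=k_{\mathcal{Z}}(z,\cdot)$. A kernel is strictly positive definite if its Gram matrix on any finite set of pairwise distinct points is positive definite. $\bm{e}_i$ denotes the $i$-th standard basis vector of $\mathbb{R}^c$ (one-hot labels). *)

theory Defs
  imports "HOL-Analysis.Abstract_Metric_Spaces" "Jordan_Normal_Form.Gauss_Jordan_Elimination"
begin

definition onehot :: "nat \<Rightarrow> nat \<Rightarrow> real list" where
  "onehot c i = map (\<lambda>j. if j = i then 1 else 0) [0..<c]"

definition label_space :: "nat \<Rightarrow> real list set" where
  "label_space c = onehot c ` {..<c}"

definition strictly_pd_kernel_on :: "'a set \<Rightarrow> ('a \<Rightarrow> 'a \<Rightarrow> real) \<Rightarrow> bool" where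
  "strictly_pd_kernel_on S k \<longleftrightarrow>
     (\<forall>x\<in>S. \<forall>y\<in>S. k x y = k y x) \<and>
     (\<forall>xs. set xs \<subseteq> S \<longrightarrow> distinct xs \<longrightarrow>
        (\<forall>a :: nat \<Rightarrow> real. (\<exists>i<length xs. a i \<noteq> 0) \<longrightarrow>
           0 < (\<Sum>i<length xs. \<Sum>j<length xs. a i * a j * k (xs ! i) (xs ! j))))"

definition gram_mat :: "('a \<Rightarrow> 'a \<Rightarrow> real) \<Rightarrow> 'a list \<Rightarrow> real mat" where
  "gram_mat k xs = mat (length xs) (length xs) (\<lambda>(i, j). k (xs ! i) (xs ! j))"

definition Ltilde :: "('b \<Rightarrow> 'b \<Rightarrow> real) \<Rightarrow> real \<Rightarrow> 'b list \<Rightarrow> real mat" where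
  "Ltilde kY \<epsilon> ys = (\<epsilon> * real (length ys)) \<cdot>\<^sub>m 1\<^sub>m (length ys) + gram_mat kY ys"

definition Lvec :: "('b \<Rightarrow> 'b \<Rightarrow> real) \<Rightarrow> 'b list \<Rightarrow> 'b \<Rightarrow> real vec" where
  "Lvec kY ys y = vec (length ys) (\<lambda>i. kY (ys ! i) y)"

definition MCMD_hat ::
  "('a \<Rightarrow> 'a \<Rightarrow> real) \<Rightarrow> ('b \<Rightarrow> 'b \<Rightarrow> real) \<Rightarrow> real \<Rightarrow> 'a list \<Rightarrow> 'b list \<Rightarrow> 'b \<Rightarrow> 'b \<Rightarrow> real" where
  "MCMD_hat kZ kY \<epsilon> zs ys y y' =
     (let Linv = the (mat_inverse (Ltilde kY \<epsilon> ys));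
          v = Lvec kY ys y - Lvec kY ys y'
      in sqrt (scalar_prod v ((Linv * gram_mat kZ zs * Linv) *\<^sub>v v)))"

end

(*
  With f y = Ltilde^-1 L_y, the distance is sqrt ((f y - f y')^T K (f y - f y')), the norm of
  f y - f y' for the inner product of the Gram matrix K, positive definite because k_Z is strictly
  positive definite and the z_i are distinct; this rewriting needs Ltilde^-1 to be symmetric.
  Symmetry and the triangle inequality (Cauchy-Schwarz) follow.  For separation, Ltilde = eps n I + L
  is positive definite, hence invertible, so f y = f y' forces L_y = L_y'.  As y and y' both occur
  among the y_i, this gives k_Y(y,y) = k_Y(y,y') and k_Y(y',y) = k_Y(y',y'): the Gram form of k_Y
  on [y, y'] vanishes at (1, -1), which strict positive definiteness allows only if y = y'.
*)
theory Submission
  imports Defs "Jordan_Normal_Form.Determinant"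
begin

definition quad_form :: "nat \<Rightarrow> (nat \<Rightarrow> nat \<Rightarrow> real) \<Rightarrow> (nat \<Rightarrow> real) \<Rightarrow> real" where
  "quad_form n k a = (\<Sum>i<n. \<Sum>j<n. a i * a j * k i j)"

definition bilin_form ::
  "nat \<Rightarrow> (nat \<Rightarrow> nat \<Rightarrow> real) \<Rightarrow> (nat \<Rightarrow> real) \<Rightarrow> (nat \<Rightarrow> real) \<Rightarrow> real" where
  "bilin_form n k a b = (\<Sum>i<n. \<Sum>j<n. a i * b j * k i j)"

lemma quad_form_cong: "(\<And>i. i < n \<Longrightarrow> a i = b i) \<Longrightarrow> quad_form n k a = quad_form n k b"
  unfolding quad_form_def by (intro sum.cong refl) auto

lemma quad_form_diff_commute: "quad_form n k (\<lambda>i. a i - b i) = quad_form n k (\<lambda>i. b i - a i)"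
  unfolding quad_form_def by (intro sum.cong refl) (simp add: algebra_simps)

lemma quad_form_nonneg:
  assumes pos: "\<And>a. \<exists>i<n. a i \<noteq> 0 \<Longrightarrow> 0 < quad_form n k a"
  shows "0 \<le> quad_form n k a"
proof (cases "\<exists>i<n. a i \<noteq> 0")
  case True
  then show ?thesis using pos less_imp_le by blast
next
  case False
  then have "quad_form n k a = quad_form n k (\<lambda>_. 0)" by (intro quad_form_cong) auto
  then show ?thesis by (simp add: quad_form_def)
qed

context
  fixes n :: nat and k :: "nat \<Rightarrow> nat \<Rightarrow> real"
  assumes sym: "\<And>i j. i < n \<Longrightarrow> j < n \<Longrightarrow> k i j = k j i"
begin

lemma bilin_form_commute: "bilin_form n k b a = bilin_form n k a b"
  unfolding bilin_form_def
  by (subst sum.swap) (intro sum.cong refl, simp add: sym mult.commute)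

lemma quad_form_add_scaled:
  "quad_form n k (\<lambda>i. a i + t * b i)
     = quad_form n k a + 2 * t * bilin_form n k a b + t\<^sup>2 * quad_form n k b"
proof -
  have "quad_form n k (\<lambda>i. a i + t * b i)
      = quad_form n k a + t * bilin_form n k a b + t * bilin_form n k b a + t\<^sup>2 * quad_form n k b"
    unfolding quad_form_def bilin_form_def
    by (simp add: algebra_simps sum.distrib sum_distrib_left power2_eq_square)
  then show ?thesis by (simp add: bilin_form_commute)
qed

context
  assumes nonneg: "\<And>a. 0 \<le> quad_form n k a"
begin

lemma bilin_form_Cauchy_Schwarz: "(bilin_form n k a b)\<^sup>2 \<le> quad_form n k a * quad_form n k b"
proof -
  define B where "B = bilin_form n k a b"
  have key: "0 \<le> quad_form n k a + 2 * t * B + t\<^sup>2 * quad_form n k b" for t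
    using nonneg[of "\<lambda>i. a i + t * b i"] by (simp add: quad_form_add_scaled B_def)
  show ?thesis
  proof (cases "quad_form n k b = 0")
    case True
    have "B = 0"
    proof (rule ccontr)
      assume "B \<noteq> 0"
      have "0 \<le> quad_form n k a + 2 * (- (quad_form n k a + 1) / (2 * B)) * B"
        using key[of "- (quad_form n k a + 1) / (2 * B)"] True by simp
      also have "\<dots> = -1" using \<open>B \<noteq> 0\<close> by (simp add: field_simps)
      finally show False by simp
    qed
    then show ?thesis using True by (simp add: B_def)
  next
    case False
    then have qb: "0 < quad_form n k b" using nonneg[of b] by simp
    have "0 \<le> quad_form n k a + 2 * (- B / quad_form n k b) * B
              + (- B / quad_form n k b)\<^sup>2 * quad_form n k b"
      using key by blast
    also have "\<dots> = quad_form n k a - B\<^sup>2 / quad_form n k b"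
      using qb by (simp add: field_simps power2_eq_square)
    finally have "B\<^sup>2 / quad_form n k b \<le> quad_form n k a" by simp
    then show ?thesis using qb by (simp add: B_def field_simps)
  qed
qed

lemma sqrt_quad_form_triangle:
  "sqrt (quad_form n k (\<lambda>i. a i + b i)) \<le> sqrt (quad_form n k a) + sqrt (quad_form n k b)"
proof -
  have "bilin_form n k a b \<le> sqrt (quad_form n k a * quad_form n k b)"
    using bilin_form_Cauchy_Schwarz real_le_rsqrt by blast
  then have "bilin_form n k a b \<le> sqrt (quad_form n k a) * sqrt (quad_form n k b)"
    by (simp add: real_sqrt_mult)
  moreover have "quad_form n k (\<lambda>i. a i + b i)
      = quad_form n k a + 2 * bilin_form n k a b + quad_form n k b"
    using quad_form_add_scaled[of a 1 b] by simp
  ultimately have "quad_form n k (\<lambda>i. a i + b i) \<le> (sqrt (quad_form n k a) + sqrt (quad_form n k b))\<^sup>2"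
    using nonneg[of a] nonneg[of b] by (simp add: power2_eq_square algebra_simps)
  then have "sqrt (quad_form n k (\<lambda>i. a i + b i))
      \<le> sqrt ((sqrt (quad_form n k a) + sqrt (quad_form n k b))\<^sup>2)"
    by (rule real_sqrt_le_mono)
  then show ?thesis using nonneg[of a] nonneg[of b] by simp
qed

end

end

lemma Metric_space_sqrt_quad_form:
  fixes f :: "'a \<Rightarrow> nat \<Rightarrow> real"
  assumes sym: "\<And>i j. i < n \<Longrightarrow> j < n \<Longrightarrow> k i j = k j i"
    and pos: "\<And>a. \<exists>i<n. a i \<noteq> 0 \<Longrightarrow> 0 < quad_form n k a"
    and inj: "\<And>x y. x \<in> S \<Longrightarrow> y \<in> S \<Longrightarrow> (\<And>i. i < n \<Longrightarrow> f x i = f y i) \<Longrightarrow> x = y"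
  shows "Metric_space S (\<lambda>x y. sqrt (quad_form n k (\<lambda>i. f x i - f y i)))"
proof
  note nonneg = quad_form_nonneg[OF pos]
  fix x y z
  show "0 \<le> sqrt (quad_form n k (\<lambda>i. f x i - f y i))"
    using nonneg by simp
  show "sqrt (quad_form n k (\<lambda>i. f x i - f y i)) = sqrt (quad_form n k (\<lambda>i. f y i - f x i))"
    by (subst quad_form_diff_commute) (rule refl)
  assume x: "x \<in> S" and y: "y \<in> S"
  show "sqrt (quad_form n k (\<lambda>i. f x i - f y i)) = 0 \<longleftrightarrow> x = y"
  proof
    assume "sqrt (quad_form n k (\<lambda>i. f x i - f y i)) = 0"
    then have "\<not> (\<exists>i<n. f x i - f y i \<noteq> 0)"
      using pos[of "\<lambda>i. f x i - f y i"] by auto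
    then show "x = y" using inj[OF x y] by auto
  qed (simp add: quad_form_def)
  assume "z \<in> S"
  show "sqrt (quad_form n k (\<lambda>i. f x i - f z i))
      \<le> sqrt (quad_form n k (\<lambda>i. f x i - f y i)) + sqrt (quad_form n k (\<lambda>i. f y i - f z i))"
    using sqrt_quad_form_triangle[OF sym nonneg, of "\<lambda>i. f x i - f y i" "\<lambda>i. f y i - f z i"]
    by simp
qed

lemma sum_nth_eq_sum_set:
  fixes a :: "nat \<Rightarrow> 'b::semiring_0"
  shows "(\<Sum>i<length xs. a i * g (xs ! i))
     = (\<Sum>y\<in>set xs. (\<Sum>i | i < length xs \<and> xs ! i = y. a i) * g y)"
proof -
  have "(\<Sum>i<length xs. a i * g (xs ! i))
      = (\<Sum>y\<in>(!) xs ` {..<length xs}. \<Sum>i | i \<in> {..<length xs} \<and> xs ! i = y. a i * g (xs ! i))"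
    by (rule sum.image_gen) simp
  also have "\<dots> = (\<Sum>y\<in>set xs. \<Sum>i | i < length xs \<and> xs ! i = y. a i * g y)"
    by (intro sum.cong) (auto simp: in_set_conv_nth)
  also have "\<dots> = (\<Sum>y\<in>set xs. (\<Sum>i | i < length xs \<and> xs ! i = y. a i) * g y)"
    by (simp only: sum_distrib_right)
  finally show ?thesis .
qed

lemma sum_set_distinct_eq_sum_nth:
  "distinct ds \<Longrightarrow> (\<Sum>y\<in>set ds. g y) = (\<Sum>p<length ds. g (ds ! p))"
  by (simp add: sum.distinct_set_conv_list sum_list_sum_nth atLeast0LessThan)

lemma strictly_pd_kernel_on_sym:
  "strictly_pd_kernel_on S k \<Longrightarrow> x \<in> S \<Longrightarrow> y \<in> S \<Longrightarrow> k x y = k y x"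
  unfolding strictly_pd_kernel_on_def by blast

lemma strictly_pd_kernel_on_pos:
  assumes "strictly_pd_kernel_on S k" "set xs \<subseteq> S" "distinct xs" "\<exists>i<length xs. a i \<noteq> 0"
  shows "0 < quad_form (length xs) (\<lambda>i j. k (xs ! i) (xs ! j)) a"
  using assms unfolding strictly_pd_kernel_on_def quad_form_def by blast

lemma strictly_pd_kernel_on_nonneg:
  assumes k: "strictly_pd_kernel_on S k" and xs: "set xs \<subseteq> S"
  shows "0 \<le> quad_form (length xs) (\<lambda>i j. k (xs ! i) (xs ! j)) a"
proof -
  \<comment> \<open>merge the coefficients of repeated points, reducing to the distinct list \<open>remdups xs\<close>\<close>
  define w where "w y = (\<Sum>i | i < length xs \<and> xs ! i = y. a i)" for y
  define ds where "ds = remdups xs"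
  have ds: "distinct ds" "set ds = set xs" by (simp_all add: ds_def)
  have inner: "(\<Sum>j<length xs. a j * k (xs ! i) (xs ! j)) = (\<Sum>y'\<in>set xs. w y' * k (xs ! i) y')" for i
    unfolding w_def by (rule sum_nth_eq_sum_set)
  have "quad_form (length xs) (\<lambda>i j. k (xs ! i) (xs ! j)) a
      = (\<Sum>i<length xs. a i * (\<Sum>j<length xs. a j * k (xs ! i) (xs ! j)))"
    by (simp add: quad_form_def sum_distrib_left mult.assoc)
  also have "\<dots> = (\<Sum>y\<in>set xs. w y * (\<Sum>y'\<in>set xs. w y' * k y y'))"
    unfolding inner w_def by (rule sum_nth_eq_sum_set)
  also have "\<dots> = (\<Sum>p<length ds. w (ds ! p) * (\<Sum>q<length ds. w (ds ! q) * k (ds ! p) (ds ! q)))"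
    by (simp only: ds(2)[symmetric] sum_set_distinct_eq_sum_nth[OF ds(1)])
  also have "\<dots> = quad_form (length ds) (\<lambda>p q. k (ds ! p) (ds ! q)) (\<lambda>p. w (ds ! p))"
    by (simp add: quad_form_def sum_distrib_left mult.assoc)
  also have "0 \<le> \<dots>"
    by (rule quad_form_nonneg, rule strictly_pd_kernel_on_pos[OF k]) (use ds xs in auto)
  finally show ?thesis .
qed

lemma strictly_pd_kernel_on_eqI:
  assumes k: "strictly_pd_kernel_on S k" and "x \<in> S" "y \<in> S"
    and "k x x = k x y" "k y x = k y y"
  shows "x = y"
proof (rule ccontr)
  assume "x \<noteq> y"
  then have "0 < quad_form (length [x, y]) (\<lambda>i j. k ([x, y] ! i) ([x, y] ! j)) (\<lambda>i. if i = 0 then 1 else -1)"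
    by (intro strictly_pd_kernel_on_pos[OF k]) (use assms in auto)
  also have "\<dots> = k x x - k x y - k y x + k y y"
    by (simp add: quad_form_def numeral_2_eq_2 lessThan_Suc)
  finally show False using assms by simp
qed

lemma scalar_prod_mult_mat_vec_eq_quad_form:
  assumes "M \<in> carrier_mat n n" and "u \<in> carrier_vec n"
  shows "u \<bullet> (M *\<^sub>v u) = quad_form n (\<lambda>i j. M $$ (i, j)) (\<lambda>i. u $ i)"
proof -
  have "u \<bullet> (M *\<^sub>v u) = (\<Sum>i<n. u $ i * (\<Sum>j<n. M $$ (i, j) * u $ j))"
    using assms by (simp add: scalar_prod_def row_def lessThan_atLeast0)
  then show ?thesis
    by (simp add: quad_form_def sum_distrib_left mult.commute mult.left_commute)
qed

lemma scalar_prod_sandwich: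
  fixes B :: "'a :: comm_semiring_0 mat"
  assumes B: "B \<in> carrier_mat n n" and "transpose_mat B = B"
    and K: "K \<in> carrier_mat n n" and v: "v \<in> carrier_vec n"
  shows "v \<bullet> ((B * K * B) *\<^sub>v v) = (B *\<^sub>v v) \<bullet> (K *\<^sub>v (B *\<^sub>v v))"
proof -
  have "(B * K * B) *\<^sub>v v = (B * K) *\<^sub>v (B *\<^sub>v v)"
    using B K v by (intro assoc_mult_mat_vec) auto
  also have "\<dots> = B *\<^sub>v (K *\<^sub>v (B *\<^sub>v v))"
    using B K v by (intro assoc_mult_mat_vec) auto
  finally have "(B * K * B) *\<^sub>v v = B *\<^sub>v (K *\<^sub>v (B *\<^sub>v v))" .
  then have "v \<bullet> ((B * K * B) *\<^sub>v v) = (transpose_mat B *\<^sub>v v) \<bullet> (K *\<^sub>v (B *\<^sub>v v))"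
    using transpose_vec_mult_scalar[OF B, of "K *\<^sub>v (B *\<^sub>v v)" v] B K v by simp
  then show ?thesis using assms(2) by simp
qed

lemma mat_inverse_exists_if_pos_def:
  fixes A :: "'a :: linordered_field mat"
  assumes A: "A \<in> carrier_mat n n"
    and pos: "\<And>u. u \<in> carrier_vec n \<Longrightarrow> u \<noteq> 0\<^sub>v n \<Longrightarrow> 0 < u \<bullet> (A *\<^sub>v u)"
  obtains B where "mat_inverse A = Some B"
proof -
  have "det A \<noteq> 0"
    using det_0_iff_vec_prod_zero[OF A] pos by fastforce
  then have "A \<in> Units (ring_mat TYPE('a) n ())"
    by (rule det_non_zero_imp_unit[OF A])
  then show ?thesis
    using mat_inverse(1)[OF A, where b = "()"] that by (cases "mat_inverse A") auto
qed

lemma transpose_mat_inverse_symmetric: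
  assumes A: "A \<in> carrier_mat n n" and sym: "transpose_mat A = A"
    and inv: "mat_inverse A = Some B"
  shows "transpose_mat B = B"
proof -
  from mat_inverse(2)[OF A inv] have AB: "A * B = 1\<^sub>m n" and B: "B \<in> carrier_mat n n"
    by auto
  have BtA: "transpose_mat B * A = 1\<^sub>m n"
    using arg_cong[OF AB, of transpose_mat] transpose_mult[OF A B] sym by simp
  have "transpose_mat B = transpose_mat B * (A * B)" using AB B by simp
  also have "\<dots> = (transpose_mat B * A) * B"
    using A B by (simp add: assoc_mult_mat[of _ n n A n B n])
  also have "\<dots> = B" using BtA B by simp
  finally show ?thesis .
qed

lemma mat_inverse_mult_mat_vec_cancel:
  assumes A: "A \<in> carrier_mat n n" and inv: "mat_inverse A = Some B"
    and u: "u \<in> carrier_vec n" and v: "v \<in> carrier_vec n"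
    and "B *\<^sub>v u = B *\<^sub>v v"
  shows "u = v"
proof -
  from mat_inverse(2)[OF A inv] have AB: "A * B = 1\<^sub>m n" and B: "B \<in> carrier_mat n n"
    by auto
  have "w = A *\<^sub>v (B *\<^sub>v w)" if "w \<in> carrier_vec n" for w
    using that A B AB by (simp add: assoc_mult_mat_vec[symmetric])
  then show ?thesis using u v assms(5) by metis
qed

lemma Ltilde_carrier: "Ltilde kY \<epsilon> ys \<in> carrier_mat (length ys) (length ys)"
  by (simp add: Ltilde_def gram_mat_def)

lemma Ltilde_index:
  "i < length ys \<Longrightarrow> j < length ys \<Longrightarrow>
     Ltilde kY \<epsilon> ys $$ (i, j) = (if i = j then \<epsilon> * real (length ys) else 0) + kY (ys ! i) (ys ! j)"
  by (simp add: Ltilde_def gram_mat_def)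

lemma transpose_Ltilde:
  assumes "strictly_pd_kernel_on S kY" and "set ys \<subseteq> S"
  shows "transpose_mat (Ltilde kY \<epsilon> ys) = Ltilde kY \<epsilon> ys"
proof -
  have "kY (ys ! i) (ys ! j) = kY (ys ! j) (ys ! i)" if "i < length ys" "j < length ys" for i j
    using strictly_pd_kernel_on_sym[OF assms(1)] assms(2) nth_mem that by blast
  then show ?thesis
    using Ltilde_carrier[of kY \<epsilon> ys] by (intro eq_matI) (auto simp: Ltilde_index)
qed

lemma Ltilde_pos_def:
  assumes kY: "strictly_pd_kernel_on S kY" and ys: "set ys \<subseteq> S" and "\<epsilon> > 0"
    and u: "u \<in> carrier_vec (length ys)" and "u \<noteq> 0\<^sub>v (length ys)"
  shows "0 < u \<bullet> (Ltilde kY \<epsilon> ys *\<^sub>v u)"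
proof -
  let ?n = "length ys"
  obtain i where i: "i < ?n" "u $ i \<noteq> 0" using u assms(5) by (auto simp: vec_eq_iff)
  have "0 < (\<Sum>j<?n. u $ j * u $ j)"
    using i by (intro sum_pos2[of _ i]) (auto simp: zero_less_mult_iff linorder_neq_iff)
  then have ridge: "0 < \<epsilon> * real ?n * (\<Sum>j<?n. u $ j * u $ j)"
    using \<open>\<epsilon> > 0\<close> i by (intro mult_pos_pos) auto
  have "u \<bullet> (Ltilde kY \<epsilon> ys *\<^sub>v u) = quad_form ?n (\<lambda>i j. Ltilde kY \<epsilon> ys $$ (i, j)) (\<lambda>i. u $ i)"
    by (rule scalar_prod_mult_mat_vec_eq_quad_form[OF Ltilde_carrier u])
  also have "\<dots> = (\<Sum>i<?n. \<Sum>j<?n. (if i = j then \<epsilon> * real ?n * (u $ i * u $ j) else 0)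
                               + u $ i * u $ j * kY (ys ! i) (ys ! j))"
    unfolding quad_form_def by (intro sum.cong refl) (simp add: Ltilde_index algebra_simps)
  also have "\<dots> = \<epsilon> * real ?n * (\<Sum>j<?n. u $ j * u $ j)
                  + quad_form ?n (\<lambda>i j. kY (ys ! i) (ys ! j)) (\<lambda>i. u $ i)"
    by (simp add: quad_form_def sum.distrib sum_distrib_left)
  finally show ?thesis
    using ridge strictly_pd_kernel_on_nonneg[OF kY ys, of "\<lambda>i. u $ i"] by linarith
qed

lemma Ltilde_symmetric_inverse:
  assumes "strictly_pd_kernel_on S kY" and "set ys \<subseteq> S" and "\<epsilon> > 0"
  obtains B where "mat_inverse (Ltilde kY \<epsilon> ys) = Some B" and "transpose_mat B = B"
proof -
  obtain B where inv: "mat_inverse (Ltilde kY \<epsilon> ys) = Some B"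
    using mat_inverse_exists_if_pos_def[OF Ltilde_carrier Ltilde_pos_def[OF assms]] .
  moreover have "transpose_mat B = B"
    using transpose_mat_inverse_symmetric[OF Ltilde_carrier transpose_Ltilde[OF assms(1,2)] inv] .
  ultimately show ?thesis using that by blast
qed

lemma Lvec_inj:
  assumes kY: "strictly_pd_kernel_on S kY" and "set ys \<subseteq> S"
    and x: "x \<in> set ys" and y: "y \<in> set ys"
    and eq: "Lvec kY ys x = Lvec kY ys y"
  shows "x = y"
proof -
  have same_col: "kY z x = kY z y" if "z \<in> set ys" for z
  proof -
    from that obtain i where i: "i < length ys" "z = ys ! i" by (auto simp: in_set_conv_nth)
    have "Lvec kY ys x $ i = Lvec kY ys y $ i" by (simp only: eq)
    then show ?thesis using i by (simp add: Lvec_def)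
  qed
  show ?thesis
    using assms(2) x y same_col[OF x] same_col[OF y] by (intro strictly_pd_kernel_on_eqI[OF kY]) auto
qed

lemma Ltilde_inverse_Lvec_inj:
  assumes kY: "strictly_pd_kernel_on S kY" and ys: "set ys \<subseteq> S"
    and inv: "mat_inverse (Ltilde kY \<epsilon> ys) = Some B"
    and "x \<in> set ys" and "y \<in> set ys"
    and eq: "\<And>i. i < length ys \<Longrightarrow> (B *\<^sub>v Lvec kY ys x) $ i = (B *\<^sub>v Lvec kY ys y) $ i"
  shows "x = y"
proof -
  have "B \<in> carrier_mat (length ys) (length ys)"
    using mat_inverse(2)[OF Ltilde_carrier inv] by blast
  then have BL: "B *\<^sub>v Lvec kY ys x = B *\<^sub>v Lvec kY ys y"
    using eq by (intro eq_vecI) auto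
  have "Lvec kY ys x = Lvec kY ys y"
    by (rule mat_inverse_mult_mat_vec_cancel[OF Ltilde_carrier inv _ _ BL]) (simp_all add: Lvec_def)
  then show ?thesis using Lvec_inj[OF kY ys] assms(4,5) by blast
qed

lemma MCMD_hat_eq_sqrt_quad_form:
  assumes inv: "mat_inverse (Ltilde kY \<epsilon> ys) = Some B" and sym: "transpose_mat B = B"
    and len: "length zs = length ys"
  shows "MCMD_hat kZ kY \<epsilon> zs ys x y
    = sqrt (quad_form (length ys) (\<lambda>i j. kZ (zs ! i) (zs ! j))
        (\<lambda>i. (B *\<^sub>v Lvec kY ys x) $ i - (B *\<^sub>v Lvec kY ys y) $ i))"
proof -
  let ?n = "length ys"
  have B: "B \<in> carrier_mat ?n ?n" using mat_inverse(2)[OF Ltilde_carrier inv] by blast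
  have K: "gram_mat kZ zs \<in> carrier_mat ?n ?n" using len by (simp add: gram_mat_def)
  have L: "Lvec kY ys z \<in> carrier_vec ?n" for z by (simp add: Lvec_def)
  define v where "v = Lvec kY ys x - Lvec kY ys y"
  have v: "v \<in> carrier_vec ?n" using L by (simp add: v_def)
  have Bv: "B *\<^sub>v v = B *\<^sub>v Lvec kY ys x - B *\<^sub>v Lvec kY ys y"
    by (simp add: v_def mult_minus_distrib_mat_vec[OF B L L])
  have "v \<bullet> ((B * gram_mat kZ zs * B) *\<^sub>v v) = (B *\<^sub>v v) \<bullet> (gram_mat kZ zs *\<^sub>v (B *\<^sub>v v))"
    by (rule scalar_prod_sandwich[OF B sym K v])
  also have "\<dots> = quad_form ?n (\<lambda>i j. gram_mat kZ zs $$ (i, j)) (\<lambda>i. (B *\<^sub>v v) $ i)"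
    using B v by (intro scalar_prod_mult_mat_vec_eq_quad_form[OF K]) simp
  also have "\<dots> = quad_form ?n (\<lambda>i j. kZ (zs ! i) (zs ! j))
                    (\<lambda>i. (B *\<^sub>v Lvec kY ys x) $ i - (B *\<^sub>v Lvec kY ys y) $ i)"
    unfolding quad_form_def using B L len by (intro sum.cong refl) (simp add: Bv gram_mat_def)
  finally show ?thesis by (simp add: MCMD_hat_def Let_def inv v_def)
qed

theorem theorem4:
  fixes kZ :: "'z \<Rightarrow> 'z \<Rightarrow> real" and kY :: "real list \<Rightarrow> real list \<Rightarrow> real"
    and c :: nat and \<epsilon> :: real and zs :: "'z list" and ys :: "real list list"
  assumes "strictly_pd_kernel_on UNIV kZ"
    and "strictly_pd_kernel_on (label_space c) kY"
    and "\<epsilon> > 0"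
    and "length zs = length ys"
    and "distinct zs"
    and "set ys \<subseteq> label_space c"
    and "label_space c \<subseteq> set ys"
  shows "Metric_space (label_space c) (MCMD_hat kZ kY \<epsilon> zs ys)"
proof -
  obtain B where inv: "mat_inverse (Ltilde kY \<epsilon> ys) = Some B" and sym: "transpose_mat B = B"
    using Ltilde_symmetric_inverse[OF assms(2,6,3)] .
  have "Metric_space (label_space c) (\<lambda>x y. sqrt (quad_form (length ys) (\<lambda>i j. kZ (zs ! i) (zs ! j))
          (\<lambda>i. (B *\<^sub>v Lvec kY ys x) $ i - (B *\<^sub>v Lvec kY ys y) $ i)))"
  proof (rule Metric_space_sqrt_quad_form)
    show "kZ (zs ! i) (zs ! j) = kZ (zs ! j) (zs ! i)" for i j
      using strictly_pd_kernel_on_sym[OF assms(1)] by simp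
    show "0 < quad_form (length ys) (\<lambda>i j. kZ (zs ! i) (zs ! j)) a"
      if "\<exists>i<length ys. a i \<noteq> 0" for a
      using strictly_pd_kernel_on_pos[OF assms(1) _ assms(5)] that assms(4) by simp
    show "x = y" if "x \<in> label_space c" "y \<in> label_space c"
      and "\<And>i. i < length ys \<Longrightarrow> (B *\<^sub>v Lvec kY ys x) $ i = (B *\<^sub>v Lvec kY ys y) $ i" for x y
      using Ltilde_inverse_Lvec_inj[OF assms(2,6) inv] that assms(7) by blast
  qed
  moreover have "MCMD_hat kZ kY \<epsilon> zs ys = (\<lambda>x y. sqrt (quad_form (length ys)
          (\<lambda>i j. kZ (zs ! i) (zs ! j)) (\<lambda>i. (B *\<^sub>v Lvec kY ys x) $ i - (B *\<^sub>v Lvec kY ys y) $ i)))"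
    by (intro ext MCMD_hat_eq_sqrt_quad_form[OF inv sym assms(4)])
  ultimately show ?thesis by simp
qed

end
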